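(* For every finite set $\textsc{prop}$ of propositional variables and every $\mathrm{PL}_{\{\oplus_3\}}[\textsc{prop}]$-formula $\phi$, every set of labeled examples that uniquely characterizes $\phi$ with respect to $\mathrm{PL}_{\{\oplus_3\}}[\textsc{prop}]$ contains at least $|\textsc{prop}|-1$ examples.
   Context: $\oplus_3$ is the ternary Boolean function $x\oplus y\oplus z$ (exclusive or). $\mathrm{PL}_{\{\oplus_3\}}[\textsc{prop}]$ is the set of formulas generated by $\phi::=x\mid\oplus_3(\phi_1,\phi_2,\phi_3)$ with $x\in\textsc{prop}$, evaluated under truth assignments $V:\textsc{prop}\to\{0,1\}$ in the obvious way; two formulas are equivalent if they agree under all such assignments. A labeled example is a pair $(V,\mathrm{lab})$ with $\mathrm{lab}\in\{0,1\}$; $\phi$ fits it if $\phi$ evaluates to $\mathrm{lab}$ under $V$. A set $E$ of labeled examples uniquely characterizes $\phi$ with respect to $\mathrm{PL}_{\{\oplus_3\}}[\textsc{prop}]$ if $\phi$ fits all of $E$ and every formula of $\mathrm{PL}_{\{\oplus_3\}}[\textsc{prop}]$ fitting all of $E$ is equivalent to $\phi$. *)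

theory Defs
  imports Main
begin

datatype 'a xform = Var 'a | Xor3 "'a xform" "'a xform" "'a xform"

fun vars :: "'a xform \<Rightarrow> 'a set" where
  "vars (Var x) = {x}"
| "vars (Xor3 a b c) = vars a \<union> vars b \<union> vars c"

text \<open>A truth assignment over prop is represented by the set of variables it makes true
  (a subset of prop).\<close>
fun eval :: "'a set \<Rightarrow> 'a xform \<Rightarrow> bool" where
  "eval V (Var x) = (x \<in> V)"
| "eval V (Xor3 a b c) = (eval V a \<noteq> (eval V b \<noteq> eval V c))"

definition is_formula :: "'a set \<Rightarrow> 'a xform \<Rightarrow> bool" where
  "is_formula P \<phi> \<longleftrightarrow> vars \<phi> \<subseteq> P"

definition is_example :: "'a set \<Rightarrow> ('a set \<times> bool) \<Rightarrow> bool" where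
  "is_example P e \<longleftrightarrow> fst e \<subseteq> P"

definition fits :: "'a xform \<Rightarrow> ('a set \<times> bool) \<Rightarrow> bool" where
  "fits \<phi> e \<longleftrightarrow> eval (fst e) \<phi> = snd e"

definition equiv_on :: "'a set \<Rightarrow> 'a xform \<Rightarrow> 'a xform \<Rightarrow> bool" where
  "equiv_on P \<phi> \<psi> \<longleftrightarrow> (\<forall>V. V \<subseteq> P \<longrightarrow> eval V \<phi> = eval V \<psi>)"

definition uniquely_characterizes ::
    "'a set \<Rightarrow> ('a set \<times> bool) set \<Rightarrow> 'a xform \<Rightarrow> bool" where
  "uniquely_characterizes P E \<phi> \<longleftrightarrow>
     (\<forall>e\<in>E. fits \<phi> e) \<and>
     (\<forall>\<psi>. is_formula P \<psi> \<and> (\<forall>e\<in>E. fits \<psi> e) \<longrightarrow> equiv_on P \<psi> \<phi>)"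

end

theory Submission
  imports Defs
begin

text \<open>A formula built from \<open>Xor3\<close> computes the parity of an odd number of variable
  occurrences, so xoring \<open>\<phi>\<close> with the parity of any even set \<open>D\<close> of variables is again
  expressible. An example \<open>V\<close> cannot tell \<open>\<phi>\<close> from this modified formula exactly when
  \<open>D \<inter> V\<close> is even. Demanding this for the assignments of \<open>E\<close> and for \<open>V = P\<close> (to make
  \<open>D\<close> itself even) is a homogeneous linear system over GF(2) in the \<open>card P\<close> unknowns
  \<open>D \<subseteq> P\<close>; with at most \<open>card E + 1 < card P\<close> equations it has a solution
  \<open>D \<noteq> {}\<close>, and the modified formula fits \<open>E\<close> but differs from \<open>\<phi>\<close> on a singleton
  assignment \<open>{d}\<close>, \<open>d \<in> D\<close>.\<close>

lemma even_card_sym_diff_iff: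
  assumes "finite X" "finite Y"
  shows "even (card (sym_diff X Y)) \<longleftrightarrow> (even (card X) \<longleftrightarrow> even (card Y))"
proof -
  have "card (X \<union> Y) = card (sym_diff X Y \<union> (X \<inter> Y))"
    by (rule arg_cong[of _ _ card]) blast
  also have "\<dots> = card (sym_diff X Y) + card (X \<inter> Y)"
    using assms by (intro card_Un_disjoint) auto
  finally have "card (X \<union> Y) = card (sym_diff X Y) + card (X \<inter> Y)" .
  moreover have "card X + card Y = card (X \<union> Y) + card (X \<inter> Y)"
    using assms by (rule card_Un_Int)
  ultimately show ?thesis by presburger
qed

lemma odd_card_insert_Int_iff:
  assumes "finite X" "a \<notin> X"
  shows "odd (card (insert a X \<inter> V)) \<longleftrightarrow> (odd (card (X \<inter> V)) \<noteq> (a \<in> V))"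
  using assms by (simp add: Int_insert_left)

lemma Xor3_parity_formula:
  assumes "finite D" "even (card D)"
  shows "\<exists>\<psi>. vars \<psi> \<subseteq> vars \<phi> \<union> D \<and> (\<forall>V. eval V \<psi> \<longleftrightarrow> (eval V \<phi> \<noteq> odd (card (D \<inter> V))))"
proof -
  obtain xs where xs: "set xs = D" "distinct xs"
    using finite_distinct_list[OF assms(1)] by blast
  have "even (length xs)"
    using assms(2) xs by (simp add: distinct_card[symmetric])
  with \<open>distinct xs\<close>
  have "\<exists>\<psi>. vars \<psi> \<subseteq> vars \<phi> \<union> set xs \<and>
          (\<forall>V. eval V \<psi> \<longleftrightarrow> (eval V \<phi> \<noteq> odd (card (set xs \<inter> V))))"
  proof (induction xs rule: induct_list012)
    case 1
    show ?case by (intro exI[of _ \<phi>]) simp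
  next
    case (2 x)
    then show ?case by simp
  next
    case (3 x y zs)
    then obtain \<psi> where \<psi>: "vars \<psi> \<subseteq> vars \<phi> \<union> set zs"
      "\<And>V. eval V \<psi> \<longleftrightarrow> (eval V \<phi> \<noteq> odd (card (set zs \<inter> V)))"
      by auto
    have "odd (card (set (x # y # zs) \<inter> V)) \<longleftrightarrow>
            (odd (card (set zs \<inter> V)) \<noteq> ((y \<in> V) \<noteq> (x \<in> V)))" for V
      using "3.prems"(1) by (auto simp: odd_card_insert_Int_iff simp del: Int_insert_left)
    with \<psi> show ?case
      by (intro exI[of _ "Xor3 \<psi> (Var x) (Var y)"]) auto
  qed
  with xs(1) show ?thesis by simp
qed

text \<open>Fewer homogeneous linear equations than unknowns over GF(2): by counting, two
  distinct subsets of \<open>P\<close> have the same parities of intersection with every \<open>V \<in> A\<close>,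
  and their symmetric difference is the solution.\<close>

lemma exists_nonempty_even_Int:
  assumes "finite P" "finite A" "card A < card P"
  shows "\<exists>D \<subseteq> P. D \<noteq> {} \<and> (\<forall>V\<in>A. even (card (D \<inter> V)))"
proof -
  define pattern where "pattern D = {V \<in> A. even (card (D \<inter> V))}" for D
  have "\<not> inj_on pattern (Pow P)"
  proof
    assume "inj_on pattern (Pow P)"
    then have "card (Pow P) \<le> card (Pow A)"
      by (rule card_inj_on_le) (auto simp: pattern_def assms(2))
    then have "(2::nat) ^ card P \<le> 2 ^ card A"
      using assms(1,2) by (simp add: card_Pow)
    with assms(3) show False by simp
  qed
  then obtain D1 D2 where D12: "D1 \<subseteq> P" "D2 \<subseteq> P" "D1 \<noteq> D2" "pattern D1 = pattern D2"
    unfolding inj_on_def by auto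
  have fin: "finite (D1 \<inter> V)" "finite (D2 \<inter> V)" for V
    using D12(1,2) assms(1) by (auto intro: finite_subset)
  define D where "D = sym_diff D1 D2"
  have "even (card (D \<inter> V))" if "V \<in> A" for V
  proof -
    have "D \<inter> V = sym_diff (D1 \<inter> V) (D2 \<inter> V)"
      unfolding D_def by auto
    moreover have "V \<in> pattern D1 \<longleftrightarrow> V \<in> pattern D2"
      using D12(4) by simp
    ultimately show ?thesis
      using that even_card_sym_diff_iff[OF fin] unfolding pattern_def by auto
  qed
  moreover have "D \<subseteq> P" "D \<noteq> {}"
    using D12(1-3) unfolding D_def by auto
  ultimately show ?thesis by blast
qed

theorem theoremA3:
  fixes P :: "'a set" and \<phi> :: "'a xform" and E :: "('a set \<times> bool) set"
  assumes "finite P"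
    and "is_formula P \<phi>"
    and "\<forall>e\<in>E. is_example P e"
    and "uniquely_characterizes P E \<phi>"
  shows "infinite E \<or> card P - 1 \<le> card E"
proof (rule ccontr)
  assume "\<not> ?thesis"
  then have "finite E" "card E + 1 < card P" by auto
  define A where "A = insert P (fst ` E)"
  have "card A \<le> card (fst ` E) + 1"
    using \<open>finite E\<close> unfolding A_def by (simp add: card_insert_if)
  also have "\<dots> \<le> card E + 1"
    using \<open>finite E\<close> by (simp add: card_image_le)
  finally have "card A < card P"
    using \<open>card E + 1 < card P\<close> by linarith
  moreover have "finite A"
    using \<open>finite E\<close> unfolding A_def by simp
  ultimately obtain D where D: "D \<subseteq> P" "D \<noteq> {}" "\<And>V. V \<in> A \<Longrightarrow> even (card (D \<inter> V))"
    using exists_nonempty_even_Int[OF assms(1)] by meson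
  have "finite D" "even (card D)"
    using finite_subset[OF D(1) assms(1)] D(3)[of P] Int_absorb2[OF D(1)] unfolding A_def by auto
  then obtain \<psi> where \<psi>: "vars \<psi> \<subseteq> vars \<phi> \<union> D"
    "\<And>V. eval V \<psi> \<longleftrightarrow> (eval V \<phi> \<noteq> odd (card (D \<inter> V)))"
    using Xor3_parity_formula[of D \<phi>] by blast
  have "\<forall>e\<in>E. fits \<psi> e"
    using assms(4) \<psi>(2) D(3) unfolding uniquely_characterizes_def fits_def A_def by auto
  moreover have "is_formula P \<psi>"
    using assms(2) \<psi>(1) D(1) unfolding is_formula_def by auto
  ultimately have "equiv_on P \<psi> \<phi>"
    using assms(4) unfolding uniquely_characterizes_def by blast
  moreover obtain d where "d \<in> D" using D(2) by blast
  ultimately show False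
    using \<psi>(2)[of "{d}"] D(1) unfolding equiv_on_def by auto
qed

end
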